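(* Under the setting of the context (with $\boldsymbol{Z}_a=[\boldsymbol{Z}_r\ \boldsymbol{Z}_u]$ of full column rank and arbitrary $\boldsymbol{w}_{\mathrm{init}}\in\mathbb{R}^D$, $\boldsymbol{y}_r\in\mathbb{R}^{N_r}$, $\boldsymbol{y}_u\in\mathbb{R}^{N_u}$), if the forgetting labels are set to $$\tilde{\boldsymbol{y}}_u=\boldsymbol{Z}_u^\top\big(\boldsymbol{\Pi}_r(\boldsymbol{w}_p-\boldsymbol{w}_{\mathrm{init}})+\boldsymbol{w}_{\mathrm{init}}\big),$$ then $\boldsymbol{w}_u=\boldsymbol{w}_r$.
   Context: Setting (over-parameterized linear model trained to interpolation / minimum-distance solutions). Given $\boldsymbol{Z}_r\in\mathbb{R}^{D\times N_r}$ (features of remaining data), $\boldsymbol{Z}_u\in\mathbb{R}^{D\times N_u}$ (features of forgetting data), with $\boldsymbol{Z}_a=[\boldsymbol{Z}_r\ \boldsymbol{Z}_u]$ of full column rank. Write $\boldsymbol{y}_a=[\boldsymbol{y}_r;\boldsymbol{y}_u]\in\mathbb{R}^{N_r+N_u}$ (original labels) and $\tilde{\boldsymbol{y}}_a=[\boldsymbol{y}_r;\tilde{\boldsymbol{y}}_u]$ (labels with the forgetting part replaced by $\tilde{\boldsymbol{y}}_u$). Define $\boldsymbol{w}_p=\boldsymbol{w}_{\mathrm{init}}+\boldsymbol{Z}_a(\boldsymbol{Z}_a^\top\boldsymbol{Z}_a)^{-1}(\boldsymbol{y}_a-\boldsymbol{Z}_a^\top\boldsymbol{w}_{\mathrm{init}})$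 (pre-trained model), $\boldsymbol{w}_u=\boldsymbol{w}_p+\boldsymbol{Z}_a(\boldsymbol{Z}_a^\top\boldsymbol{Z}_a)^{-1}(\tilde{\boldsymbol{y}}_a-\boldsymbol{Z}_a^\top\boldsymbol{w}_p)$ (unlearned model), $\boldsymbol{w}_r=\boldsymbol{w}_{\mathrm{init}}+\boldsymbol{Z}_r(\boldsymbol{Z}_r^\top\boldsymbol{Z}_r)^{-1}(\boldsymbol{y}_r-\boldsymbol{Z}_r^\top\boldsymbol{w}_{\mathrm{init}})$ (retrained model). Let $\boldsymbol{\Pi}_r=\boldsymbol{Z}_r(\boldsymbol{Z}_r^\top\boldsymbol{Z}_r)^{-1}\boldsymbol{Z}_r^\top$. *)

theory Defs
  imports "HOL-Analysis.Analysis"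
begin

definition hcat :: "real^'r^'d \<Rightarrow> real^'u^'d \<Rightarrow> real^('r + 'u)^'d" where
  "hcat Zr Zu = (\<chi> i j. case j of Inl a \<Rightarrow> Zr $ i $ a | Inr b \<Rightarrow> Zu $ i $ b)"

definition vcat :: "real^'r \<Rightarrow> real^'u \<Rightarrow> real^('r + 'u)" where
  "vcat yr yu = (\<chi> j. case j of Inl a \<Rightarrow> yr $ a | Inr b \<Rightarrow> yu $ b)"

definition min_dist_update :: "real^'d \<Rightarrow> real^'n^'d \<Rightarrow> real^'n \<Rightarrow> real^'d" where
  "min_dist_update w Z y =
     w + Z *v (matrix_inv (transpose Z ** Z) *v (y - transpose Z *v w))"

definition proj_mat :: "real^'n^'d \<Rightarrow> real^'d^'d" where
  "proj_mat Z = Z ** matrix_inv (transpose Z ** Z) ** transpose Z"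

end

theory Submission
  imports Defs
begin

text \<open>A minimum-distance update w' = min_dist_update w Z y is the unique vector with
  Z^T w' = y and w' - w in the column space of Z. Since w_p also interpolates y_r on Z_r,
  Pi_r (w_p - w_init) + w_init is the minimum-distance update of w_init for y_r, i.e. w_r;
  so the chosen forgetting labels are Z_u^T w_r and w_r interpolates the new labels on Z_a.
  Moreover w_r - w_p lies in the column space of Z_a, as both models differ from w_init by
  such vectors. Uniqueness of the update from w_p gives w_u = w_r.\<close>

lemma sum_UNIV_Plus:
  fixes f :: "'a::finite + 'b::finite \<Rightarrow> 'c::comm_monoid_add"
  shows "sum f UNIV = (\<Sum>a\<in>UNIV. f (Inl a)) + (\<Sum>b\<in>UNIV. f (Inr b))"
  using sum.Plus[of "UNIV :: 'a set" "UNIV :: 'b set" f] by (simp add: comp_def)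

lemma hcat_mult_vcat: "hcat Zr Zu *v vcat x y = Zr *v x + Zu *v y"
  by (simp add: vec_eq_iff matrix_vector_mult_def hcat_def vcat_def sum_UNIV_Plus)

lemma transpose_hcat_mult: "transpose (hcat Zr Zu) *v v = vcat (transpose Zr *v v) (transpose Zu *v v)"
  by (simp add: vec_eq_iff matrix_vector_mult_def hcat_def vcat_def transpose_def split: sum.split)

lemma vcat_eq_iff: "vcat a b = vcat c d \<longleftrightarrow> a = c \<and> b = d"
proof
  assume eq: "vcat a b = vcat c d"
  have "a $ i = c $ i" for i
    using arg_cong[OF eq, of "\<lambda>v. v $ Inl i"] by (simp add: vcat_def)
  moreover have "b $ i = d $ i" for i
    using arg_cong[OF eq, of "\<lambda>v. v $ Inr i"] by (simp add: vcat_def)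
  ultimately show "a = c \<and> b = d" by (simp add: vec_eq_iff)
qed simp

lemma range_hcat_left: "Zr *v x \<in> range ((*v) (hcat Zr Zu))"
proof -
  have "Zr *v x = hcat Zr Zu *v vcat x 0" by (simp add: hcat_mult_vcat)
  then show ?thesis by blast
qed

lemma inj_hcat_left:
  assumes "inj ((*v) (hcat Zr Zu))"
  shows "inj ((*v) Zr)"
proof (rule injI)
  fix x y assume "Zr *v x = Zr *v y"
  then have "hcat Zr Zu *v vcat x 0 = hcat Zr Zu *v vcat y 0"
    by (simp add: hcat_mult_vcat)
  with assms show "x = y" by (simp add: inj_eq vcat_eq_iff)
qed

lemma eq_if_transpose_eq_in_range:
  fixes Z :: "real^'n^'d"
  assumes "transpose Z *v u = transpose Z *v v" and "u - v \<in> range ((*v) Z)"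
  shows "u = v"
proof -
  obtain c where c: "u - v = Z *v c" using assms(2) by blast
  have "inner (u - v) (u - v) = inner c (transpose Z *v (u - v))"
    by (metis c dot_lmul_matrix transpose_matrix_vector inner_commute)
  also have "\<dots> = 0"
    using assms(1) by (simp add: matrix_vector_mult_diff_distrib)
  finally show ?thesis by simp
qed

lemma invertible_gram:
  fixes Z :: "real^'n^'d"
  assumes "inj ((*v) Z)"
  shows "invertible (transpose Z ** Z)"
proof -
  have "x = 0" if "(transpose Z ** Z) *v x = 0" for x
  proof -
    have "transpose Z *v (Z *v x) = transpose Z *v 0"
      using that by (simp add: matrix_vector_mul_assoc)
    then have "Z *v x = 0"
      by (rule eq_if_transpose_eq_in_range) simp
    with assms show "x = 0" by (metis injD matrix_vector_mult_0_right)
  qed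
  then have "inj ((*v) (transpose Z ** Z))"
    by (simp add: linear_injective_0 matrix_vector_mul_linear)
  then show ?thesis
    using invertible_left_inverse matrix_left_invertible_injective by blast
qed

lemma matrix_inv_right: "invertible A \<Longrightarrow> A ** matrix_inv A = mat 1"
  unfolding invertible_def matrix_inv_def by (metis (mono_tags, lifting) someI_ex)

lemma transpose_min_dist_update:
  fixes Z :: "real^'n^'d"
  assumes "invertible (transpose Z ** Z)"
  shows "transpose Z *v min_dist_update w Z y = y"
  by (simp add: min_dist_update_def matrix_vector_right_distrib matrix_vector_mul_assoc
      matrix_mul_assoc matrix_inv_right[OF assms])

lemma min_dist_update_diff_in_range: "min_dist_update w Z y - w \<in> range ((*v) Z)"
  by (simp add: min_dist_update_def)

lemma min_dist_update_unique:
  fixes Z :: "real^'n^'d"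
  assumes "invertible (transpose Z ** Z)"
    and "transpose Z *v v = y" and "v - w \<in> range ((*v) Z)"
  shows "min_dist_update w Z y = v"
proof (rule eq_if_transpose_eq_in_range)
  show "transpose Z *v min_dist_update w Z y = transpose Z *v v"
    unfolding assms(2) using assms(1) by (rule transpose_min_dist_update)
  obtain a where a: "min_dist_update w Z y - w = Z *v a"
    using min_dist_update_diff_in_range by blast
  obtain c where c: "v - w = Z *v c" using assms(3) by blast
  have "min_dist_update w Z y - v = (min_dist_update w Z y - w) - (v - w)" by simp
  also have "\<dots> = Z *v (a - c)" by (simp add: a c matrix_vector_mult_diff_distrib)
  finally show "min_dist_update w Z y - v \<in> range ((*v) Z)" by blast
qed

lemma min_dist_update_hcat_diff_in_range:
  "min_dist_update w Zr y' - min_dist_update w (hcat Zr Zu) y \<in> range ((*v) (hcat Zr Zu))"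
proof -
  obtain b where b: "min_dist_update w (hcat Zr Zu) y - w = hcat Zr Zu *v b"
    using min_dist_update_diff_in_range by blast
  obtain c where "min_dist_update w Zr y' - w = Zr *v c"
    using min_dist_update_diff_in_range by blast
  moreover obtain c' where "Zr *v c = hcat Zr Zu *v c'"
    using range_hcat_left by blast
  ultimately have "min_dist_update w Zr y' - w = hcat Zr Zu *v c'" by simp
  then have "min_dist_update w Zr y' - min_dist_update w (hcat Zr Zu) y = hcat Zr Zu *v (c' - b)"
    using b by (simp add: matrix_vector_mult_diff_distrib algebra_simps)
  then show ?thesis by blast
qed

lemma min_dist_update_transpose:
  "min_dist_update w Z (transpose Z *v v) = w + proj_mat Z *v (v - w)"
  by (simp add: min_dist_update_def proj_mat_def matrix_vector_mul_assoc[symmetric]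
      matrix_vector_mult_diff_distrib)

theorem corollary1:
  fixes Zr :: "real^'nr^'d" and Zu :: "real^'nu^'d"
    and w_init :: "real^'d" and yr :: "real^'nr" and yu :: "real^'nu"
  assumes full_rank: "rank (hcat Zr Zu) = CARD('nr + 'nu)"
  shows "let Za = hcat Zr Zu;
             wp = min_dist_update w_init Za (vcat yr yu);
             yu_tilde = transpose Zu *v (proj_mat Zr *v (wp - w_init) + w_init);
             wu = min_dist_update wp Za (vcat yr yu_tilde);
             wr = min_dist_update w_init Zr yr
         in wu = wr"
proof -
  define Za where "Za = hcat Zr Zu"
  define wp where "wp = min_dist_update w_init Za (vcat yr yu)"
  define wr where "wr = min_dist_update w_init Zr yr"
  have injA: "inj ((*v) Za)" using full_rank full_rank_injective Za_def by blast
  have gram_a: "invertible (transpose Za ** Za)" using injA by (rule invertible_gram)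
  have gram_r: "invertible (transpose Zr ** Zr)"
    using injA unfolding Za_def by (rule invertible_gram[OF inj_hcat_left])
  have "transpose Za *v wp = vcat yr yu"
    unfolding wp_def using gram_a by (rule transpose_min_dist_update)
  then have "transpose Zr *v wp = yr"
    unfolding Za_def transpose_hcat_mult by (simp add: vcat_eq_iff)
  then have proj_wp: "proj_mat Zr *v (wp - w_init) + w_init = wr"
    using min_dist_update_transpose[of w_init Zr wp] by (simp add: wr_def add.commute)
  have wr_interp: "transpose Za *v wr = vcat yr (transpose Zu *v wr)"
    unfolding Za_def transpose_hcat_mult wr_def transpose_min_dist_update[OF gram_r] ..
  have "wr - wp \<in> range ((*v) Za)"
    unfolding wr_def wp_def Za_def by (rule min_dist_update_hcat_diff_in_range)
  with gram_a wr_interp have "min_dist_update wp Za (vcat yr (transpose Zu *v wr)) = wr"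
    by (rule min_dist_update_unique)
  then show ?thesis
    unfolding Let_def Za_def[symmetric] wp_def[symmetric] wr_def[symmetric] proj_wp .
qed

end
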